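(* Let $m_1,m_3,m_4\in\mathbb{R}$ and let $\mathfrak g$ be the real linear span of $E_1=\begin{pmatrix} -2m_1&m_3-im_4&im_1^2&1\\0&0&0&0\\4i&0&2m_1&0\\0&0&0&0\end{pmatrix}$, $E_2=\begin{pmatrix}0&0&0&i\\0&0&0&0\\0&0&0&0\\0&0&0&0\end{pmatrix}$, $E_3=\begin{pmatrix}\frac32 m_3&-m_1&\frac{i}{4}m_1m_3&0\\0&m_3&0&1\\0&2i&2m_3&0\\0&0&0&0\end{pmatrix}$, $E_4=\begin{pmatrix}\frac32 m_4&im_1&\frac{i}{4}m_1m_4&0\\0&m_4&0&i\\0&2&2m_4&0\\0&0&0&0\end{pmatrix}$, $E_5=\begin{pmatrix}0&0&0&0\\0&0&0&0\\0&0&0&1\\0&0&0&0\end{pmatrix}$. Then every integral variety of type $(1/2,0)$ related to $\mathfrak g$ is affinely equivalent to (an open piece of) one of the hypersurfaces 1) $v=2x_1^2+|z_2|^2$; 2) $v=\dfrac{x_1^2}{1-x_2}+2|z_2|^2$.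
   Context: Coordinates in $\mathbb{C}^3$ are $z_1=x_1+iy_1$, $z_2=x_2+iy_2$, $w=u+iv$, $z=(z_1,z_2)$. To a complex $4\times4$ matrix $\begin{pmatrix}a_1&a_2&a_3&p\\ b_1&b_2&b_3&s\\ c_1&c_2&c_3&q\\0&0&0&0\end{pmatrix}$ one associates the holomorphic affine vector field $Z=(a_1z_1+a_2z_2+a_3w+p)\frac{\partial}{\partial z_1}+(b_1z_1+b_2z_2+b_3w+s)\frac{\partial}{\partial z_2}+(c_1z_1+c_2z_2+c_3w+q)\frac{\partial}{\partial w}$. For a real linear span $\mathfrak g$ of such matrices, an integral variety of type $(1/2,0)$ related to $\mathfrak g$ is a real-analytic strictly pseudoconvex real hypersurface $M$ defined near $0\in\mathbb{C}^3$, with $0\in M$, given near $0$ by an equation $v=|z_1|^2+|z_2|^2+\frac12(z_1^2+\bar z_1^2)+\sum_{k+l+2m\ge 3}F_{klm}(z,\bar z)u^m$ (with $F_{klm}$ a polynomial of degree $k$ in $z$ and $l$ in $\bar z$, the right-hand side real), such that for every $Z\in\mathfrak g$ the real vector field $Z+\bar Z$ is tangent to $M$, i.e. $\mathrm{Re}(Z(\Phi))|_M=0$ for a defining function $\Phi$ of $M$. Two hypersurfaces are affinely equivalent if a complex affine transformation of $\mathbb{C}^3$ maps a neighbourhood in one onto an open piece of the other. *)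

theory Defs
  imports "HOL-Analysis.Analysis"
begin

text \<open>Points of C^3 are vectors p :: complex^3 with p$1 = z1, p$2 = z2, p$3 = w.
  Complex 4x4 matrices are elements of complex^4^4.\<close>

definition hom_coords :: "complex^3 \<Rightarrow> complex^4" where
  "hom_coords p = vector [p$1, p$2, p$3, 1]"

definition affine_vf :: "complex^4^4 \<Rightarrow> complex^3 \<Rightarrow> complex^3" where
  "affine_vf A p = vector [(A *v hom_coords p)$1, (A *v hom_coords p)$2, (A *v hom_coords p)$3]"

definition mat4 :: "complex list list \<Rightarrow> complex^4^4" where
  "mat4 rs = vector (map vector rs)"

definition E1 :: "real \<Rightarrow> real \<Rightarrow> real \<Rightarrow> complex^4^4" where
  "E1 m1 m3 m4 = mat4
     [[-2* of_real m1, of_real m3 - \<i> * of_real m4, \<i> * (of_real m1)^2, 1],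
      [0, 0, 0, 0],
      [4* \<i>, 0, 2* of_real m1, 0],
      [0, 0, 0, 0]]"

definition E2 :: "complex^4^4" where
  "E2 = mat4 [[0,0,0,\<i>],[0,0,0,0],[0,0,0,0],[0,0,0,0]]"

definition E3 :: "real \<Rightarrow> real \<Rightarrow> complex^4^4" where
  "E3 m1 m3 = mat4
     [[3/2* of_real m3, -of_real m1, \<i> / 4* of_real m1* of_real m3, 0],
      [0, of_real m3, 0, 1],
      [0, 2* \<i>, 2* of_real m3, 0],
      [0, 0, 0, 0]]"

definition E4 :: "real \<Rightarrow> real \<Rightarrow> complex^4^4" where
  "E4 m1 m4 = mat4
     [[3/2* of_real m4, \<i> * of_real m1, \<i> / 4* of_real m1* of_real m4, 0],
      [0, of_real m4, 0, \<i>],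
      [0, 2, 2* of_real m4, 0],
      [0, 0, 0, 0]]"

definition E5 :: "complex^4^4" where
  "E5 = mat4 [[0,0,0,0],[0,0,0,0],[0,0,0,1],[0,0,0,0]]"

definition lie_g :: "real \<Rightarrow> real \<Rightarrow> real \<Rightarrow> (complex^4^4) set" where
  "lie_g m1 m3 m4 = span {E1 m1 m3 m4, E2, E3 m1 m3, E4 m1 m4, E5}"

definition wdeg :: "nat \<times> nat \<times> nat \<times> nat \<times> nat \<Rightarrow> nat" where
  "wdeg \<alpha> = (case \<alpha> of (a,b,c,d,e) \<Rightarrow> a + b + c + d + 2*e)"

definition monomial5 :: "nat \<times> nat \<times> nat \<times> nat \<times> nat \<Rightarrow> complex \<Rightarrow> complex \<Rightarrow> real \<Rightarrow> real" where
  "monomial5 \<alpha> z1 z2 u = (case \<alpha> of (a,b,c,d,e) \<Rightarrow>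
      Re z1 ^ a * Im z1 ^ b * Re z2 ^ c * Im z2 ^ d * u ^ e)"

definition Q_norm :: "complex \<Rightarrow> complex \<Rightarrow> real" where
  "Q_norm z1 z2 = (cmod z1)^2 + (cmod z2)^2 + Re ((z1^2 + (cnj z1)^2) / 2)"

definition normal_form_fn :: "(complex \<Rightarrow> complex \<Rightarrow> real \<Rightarrow> real) \<Rightarrow> real \<Rightarrow> bool" where
  "normal_form_fn F r \<longleftrightarrow> r > 0 \<and>
     (\<exists>c :: nat \<times> nat \<times> nat \<times> nat \<times> nat \<Rightarrow> real.
        (\<forall>\<alpha>. wdeg \<alpha> \<le> 2 \<longrightarrow> c \<alpha> = 0) \<and>
        (\<forall>z1 z2 u. \<bar>Re z1\<bar> < r \<and> \<bar>Im z1\<bar> < r \<and> \<bar>Re z2\<bar> < r \<and> \<bar>Im z2\<bar> < r \<and> \<bar>u\<bar> < r \<longrightarrow>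
           ((\<lambda>\<alpha>. c \<alpha> * monomial5 \<alpha> z1 z2 u) has_sum (F z1 z2 u - Q_norm z1 z2)) UNIV))"

definition in_box :: "real \<Rightarrow> complex^3 \<Rightarrow> bool" where
  "in_box r p \<longleftrightarrow> \<bar>Re (p$1)\<bar> < r \<and> \<bar>Im (p$1)\<bar> < r \<and> \<bar>Re (p$2)\<bar> < r \<and> \<bar>Im (p$2)\<bar> < r
                   \<and> \<bar>Re (p$3)\<bar> < r"

text \<open>Integral variety of type (1/2,0) related to g: near 0 (i.e. inside the open set U
  containing 0), M is {v = F(z1,z2,u)} with F as above, and for every Z in g the real
  vector field Z + conj Z (whose value at p, viewed in C^3 = R^6, is Z(p)) is tangent to M,
  i.e. the differential of the defining function Phi = v - F kills it along M.\<close>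
definition integral_variety :: "real \<Rightarrow> real \<Rightarrow> real \<Rightarrow> (complex^3) set \<Rightarrow> bool" where
  "integral_variety m1 m3 m4 M \<longleftrightarrow>
     (\<exists>F r U. normal_form_fn F r \<and> open U \<and> 0 \<in> U \<and> (\<forall>p\<in>U. in_box r p) \<and>
        M \<inter> U = {p \<in> U. Im (p$3) = F (p$1) (p$2) (Re (p$3))} \<and>
        (\<forall>A \<in> lie_g m1 m3 m4. \<forall>p \<in> M \<inter> U.
           \<exists>D. ((\<lambda>q. Im (q$3) - F (q$1) (q$2) (Re (q$3))) has_derivative D) (at p)
               \<and> D (affine_vf A p) = 0))"

definition model1 :: "(complex^3) set" where
  "model1 = {p. Im (p$3) = 2 * (Re (p$1))^2 + (cmod (p$2))^2}"

definition model2 :: "(complex^3) set" where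
  "model2 = {p. Re (p$2) \<noteq> 1 \<and> Im (p$3) = (Re (p$1))^2 / (1 - Re (p$2)) + 2 * (cmod (p$2))^2}"

definition affinely_equiv_to :: "(complex^3) set \<Rightarrow> (complex^3) set \<Rightarrow> bool" where
  "affinely_equiv_to M S \<longleftrightarrow>
     (\<exists>(A::complex^3^3) b V W. invertible A \<and> open V \<and> 0 \<in> V \<and> open W \<and>
        (\<lambda>p. A *v p + b) ` (M \<inter> V) = S \<inter> W)"

end

theory Submission
  imports Defs
begin

text \<open>Near \<open>0\<close> write \<open>M\<close> as a graph \<open>v = G\<close>. Tangency of \<open>E2\<close> and \<open>E5\<close> makes \<open>G\<close> independent
  of \<open>y1\<close> and \<open>u\<close>, and tangency of \<open>E1\<close>, \<open>E3\<close>, \<open>E4\<close> is a linear system for its remaining partial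
  derivatives. Along any solution, \<open>\<Phi> = \<delta> (v - |z2|\<^sup>2) - 2 (x1 + m1 v / 2)\<^sup>2\<close> with
  \<open>\<delta> = 1 + m3 x2 + m4 y2\<close> satisfies \<open>\<delta> d\<Phi> = 3 \<Phi> d\<delta>\<close>, so \<open>\<Phi>/\<delta>\<^sup>3\<close> is constant, and it vanishes
  because \<open>0 \<in> M\<close>. Near \<open>0\<close> the quadric \<open>\<Phi> = 0\<close> is itself a graph over the same variables, so it
  coincides with \<open>M\<close>. The substitution \<open>z1 \<mapsto> z1 - i m1 w / 2\<close> maps it onto model 1 when
  \<open>m3 = m4 = 0\<close>; otherwise, followed by real rescalings of \<open>z1\<close>, \<open>w\<close> and the complex rescaling
  \<open>z2 \<mapsto> -(m3 - i m4) z2\<close>, which makes \<open>\<delta> = 1 - x2\<close>, it maps it onto model 2.\<close>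

lemma vector_4 [simp]:
  "(vector [x,y,z,w] :: ('a::zero)^4) $ 1 = x"
  "(vector [x,y,z,w] :: ('a::zero)^4) $ 2 = y"
  "(vector [x,y,z,w] :: ('a::zero)^4) $ 3 = z"
  "(vector [x,y,z,w] :: ('a::zero)^4) $ 4 = w"
  unfolding vector_def by simp_all

lemma has_derivative_vec_nth [derivative_intros]:
  "((\<lambda>x::'a::real_normed_vector^'n. x $ i) has_derivative (\<lambda>y. y $ i)) F"
  by (rule bounded_linear_imp_has_derivative[OF bounded_linear_vec_nth])

lemma affine_vf_E1:
  "affine_vf (E1 m1 m3 m4) p = vector
     [-2 * of_real m1 * p$1 + (of_real m3 - \<i> * of_real m4) * p$2 + \<i> * (of_real m1)^2 * p$3 + 1,
      0, 4 * \<i> * p$1 + 2 * of_real m1 * p$3]"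
  unfolding affine_vf_def E1_def mat4_def hom_coords_def matrix_vector_mult_def by (simp add: sum_4)

lemma affine_vf_E2: "affine_vf E2 p = vector [\<i>, 0, 0]"
  unfolding affine_vf_def E2_def mat4_def hom_coords_def matrix_vector_mult_def by (simp add: sum_4)

lemma affine_vf_E3:
  "affine_vf (E3 m1 m3) p = vector
     [3/2 * of_real m3 * p$1 - of_real m1 * p$2 + \<i>/4 * of_real m1 * of_real m3 * p$3,
      of_real m3 * p$2 + 1, 2 * \<i> * p$2 + 2 * of_real m3 * p$3]"
  unfolding affine_vf_def E3_def mat4_def hom_coords_def matrix_vector_mult_def by (simp add: sum_4)

lemma affine_vf_E4:
  "affine_vf (E4 m1 m4) p = vector
     [3/2 * of_real m4 * p$1 + \<i> * of_real m1 * p$2 + \<i>/4 * of_real m1 * of_real m4 * p$3,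
      of_real m4 * p$2 + \<i>, 2 * p$2 + 2 * of_real m4 * p$3]"
  unfolding affine_vf_def E4_def mat4_def hom_coords_def matrix_vector_mult_def by (simp add: sum_4)

lemma affine_vf_E5: "affine_vf E5 p = vector [0, 0, 1]"
  unfolding affine_vf_def E5_def mat4_def hom_coords_def matrix_vector_mult_def by (simp add: sum_4)

lemma bounded_linear_complex3_expansion:
  fixes L :: "complex^3 \<Rightarrow> real"
  assumes "bounded_linear L"
  shows "L k = Re (k$1) * L (vector[1,0,0]) + Im (k$1) * L (vector[\<i>,0,0])
             + Re (k$2) * L (vector[0,1,0]) + Im (k$2) * L (vector[0,\<i>,0])
             + Re (k$3) * L (vector[0,0,1]) + Im (k$3) * L (vector[0,0,\<i>])"
proof -
  interpret L: bounded_linear L by fact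
  have "k = Re (k$1) *\<^sub>R vector[1,0,0] + Im (k$1) *\<^sub>R vector[\<i>,0,0]
          + Re (k$2) *\<^sub>R vector[0,1,0] + Im (k$2) *\<^sub>R vector[0,\<i>,0]
          + Re (k$3) *\<^sub>R vector[0,0,1] + Im (k$3) *\<^sub>R vector[0,0,\<i>]"
    unfolding vec_eq_iff forall_3 by (simp add: complex_eq_iff)
  then have "L k = L (Re (k$1) *\<^sub>R vector[1,0,0] + Im (k$1) *\<^sub>R vector[\<i>,0,0]
          + Re (k$2) *\<^sub>R vector[0,1,0] + Im (k$2) *\<^sub>R vector[0,\<i>,0]
          + Re (k$3) *\<^sub>R vector[0,0,1] + Im (k$3) *\<^sub>R vector[0,0,\<i>])"
    by simp
  then show ?thesis by (simp add: L.add L.scaleR)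
qed

lemma has_derivative_zero_along_invariant_line:
  fixes f :: "'a::real_normed_vector \<Rightarrow> 'b::real_normed_vector"
  assumes df: "(f has_derivative D) (at p)" and inv: "\<And>t. f (p + t *\<^sub>R v) = f p"
  shows "D v = 0"
proof -
  have "((\<lambda>t::real. p + t *\<^sub>R v) has_derivative (\<lambda>t. t *\<^sub>R v)) (at 0)"
    by (auto intro!: derivative_eq_intros)
  moreover have "(f has_derivative D) (at (p + 0 *\<^sub>R v))"
    using df by simp
  ultimately have "((\<lambda>t::real. f (p + t *\<^sub>R v)) has_derivative (\<lambda>t. D (t *\<^sub>R v))) (at 0)"
    by (rule has_derivative_compose[unfolded o_def])
  moreover have "((\<lambda>t::real. f (p + t *\<^sub>R v)) has_derivative (\<lambda>t. 0)) (at 0)"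
    unfolding inv by simp
  ultimately have "(\<lambda>t. D (t *\<^sub>R v)) = (\<lambda>t. 0)"
    by (rule has_derivative_unique)
  then show ?thesis by (metis scaleR_one)
qed

lemma has_derivative_shift_invariant:
  fixes f :: "'a::real_normed_vector \<Rightarrow> 'b::real_normed_vector"
  assumes df: "(f has_derivative D) (at (p + c))" and inv: "\<And>y. f (y + c) = f y"
  shows "(f has_derivative D) (at p)"
proof -
  have "((\<lambda>y. y + c) has_derivative (\<lambda>h. h)) (at p)"
    by (auto intro!: derivative_eq_intros)
  from has_derivative_compose[OF this df] show ?thesis
    by (simp add: o_def inv)
qed

lemma has_derivative_quotient_power_zero:
  fixes P d :: "'a::real_normed_vector \<Rightarrow> real"
  assumes dP: "(P has_derivative P') (at q)" and dd: "(d has_derivative d') (at q)"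
    and nz: "d q \<noteq> 0" and log_deriv: "\<And>h. P' h * d q = of_nat k * d' h * P q"
  shows "((\<lambda>y. P y / d y ^ k) has_derivative (\<lambda>h. 0)) (at q)"
proof -
  have "((\<lambda>y. d y ^ k) has_derivative (\<lambda>h. of_nat k * d' h * d q ^ (k - 1))) (at q)"
    using has_derivative_power[OF dd, of k] by simp
  from has_derivative_divide[OF dP this] nz
  have "((\<lambda>y. P y / d y ^ k) has_derivative
      (\<lambda>h. - P q * (inverse (d q ^ k) * (of_nat k * d' h * d q ^ (k - 1)) * inverse (d q ^ k))
            + P' h / d q ^ k)) (at q)"
    by simp
  moreover have "- P q * (inverse (d q ^ k) * (of_nat k * d' h * d q ^ (k - 1)) * inverse (d q ^ k))
            + P' h / d q ^ k = 0" for h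
  proof (cases k)
    case (Suc j)
    have "P' h * d q ^ k = of_nat k * d' h * P q * d q ^ j"
      by (simp only: Suc power_Suc mult.assoc[symmetric] log_deriv)
    then show ?thesis using nz Suc by (simp add: field_simps)
  qed (use log_deriv nz in simp)
  ultimately show ?thesis by simp
qed

definition delta :: "real \<Rightarrow> real \<Rightarrow> complex^3 \<Rightarrow> real" where
  "delta m3 m4 p = 1 + m3 * Re (p$2) + m4 * Im (p$2)"

definition orbit_eq :: "real \<Rightarrow> real \<Rightarrow> real \<Rightarrow> complex^3 \<Rightarrow> real \<Rightarrow> real" where
  "orbit_eq m1 m3 m4 p v =
     delta m3 m4 p * (v - (Re (p$2)^2 + Im (p$2)^2)) - 2 * (Re (p$1) + m1 * v / 2)^2"

text \<open>The tangency of the fields of \<open>E1\<close>, \<open>E3\<close>, \<open>E4\<close> to the graph \<open>v = G(x1, x2, y2)\<close>,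
  written in terms of \<open>a1 = G_x1\<close>, \<open>a2 = G_x2\<close>, \<open>b2 = G_y2\<close>.\<close>
definition tangency_system ::
    "real \<Rightarrow> real \<Rightarrow> real \<Rightarrow> real \<Rightarrow> real \<Rightarrow> real \<Rightarrow> real \<Rightarrow> real \<Rightarrow> real \<Rightarrow> real \<Rightarrow> bool" where
  "tangency_system m1 m3 m4 x1 x2 y2 v a1 a2 b2 \<longleftrightarrow>
     (1 - 2 * m1 * x1 + m3 * x2 + m4 * y2 - m1^2 * v) * a1 = 4 * x1 + 2 * m1 * v \<and>
     (3/2 * m3 * x1 - m1 * x2 - m1 * m3 * v / 4) * a1 + (1 + m3 * x2) * a2 + m3 * y2 * b2
       = 2 * x2 + 2 * m3 * v \<and>
     (3/2 * m4 * x1 - m1 * y2 - m1 * m4 * v / 4) * a1 + m4 * x2 * a2 + (1 + m4 * y2) * b2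
       = 2 * y2 + 2 * m4 * v"

lemma tangency_system_at:
  fixes G :: "complex^3 \<Rightarrow> real"
  assumes G_Im: "\<And>t. G (p + t *\<^sub>R vector[0,0,\<i>]) = G p"
    and der: "((\<lambda>q. Im (q$3) - G q) has_derivative D) (at p)"
    and tang: "\<And>A. A \<in> {E1 m1 m3 m4, E2, E3 m1 m3, E4 m1 m4, E5} \<Longrightarrow> D (affine_vf A p) = 0"
  obtains a1 a2 b2 where
    "(G has_derivative (\<lambda>k. Re (k$1) * a1 + Re (k$2) * a2 + Im (k$2) * b2)) (at p)"
    "tangency_system m1 m3 m4 (Re (p$1)) (Re (p$2)) (Im (p$2)) (Im (p$3)) a1 a2 b2"
proof -
  define D' where "D' k = Im (k$3) - D k" for k :: "complex^3"
  define a1 a2 b2 where "a1 = D' (vector[1,0,0])" and "a2 = D' (vector[0,1,0])"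
    and "b2 = D' (vector[0,\<i>,0])"
  have "((\<lambda>q. Im (q$3) - (Im (q$3) - G q)) has_derivative D') (at p)"
    unfolding D'_def[abs_def]
    by (rule has_derivative_diff[OF _ der]) (auto intro!: derivative_eq_intros)
  then have dG: "(G has_derivative D') (at p)" by simp
  have vf: "D' (affine_vf A p) = Im (affine_vf A p $ 3)"
    if "A \<in> {E1 m1 m3 m4, E2, E3 m1 m3, E4 m1 m4, E5}" for A
    using tang[OF that] by (simp add: D'_def)
  have "D' (vector[\<i>,0,0]) = 0" "D' (vector[0,0,1]) = 0"
    using vf[of E2] vf[of E5] by (simp_all add: affine_vf_E2 affine_vf_E5)
  moreover have "D' (vector[0,0,\<i>]) = 0"
    using dG G_Im by (rule has_derivative_zero_along_invariant_line)
  ultimately have D'_expansion: "D' k = Re (k$1) * a1 + Re (k$2) * a2 + Im (k$2) * b2" for k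
    using bounded_linear_complex3_expansion[OF has_derivative_bounded_linear[OF dG], of k]
    by (simp add: a1_def a2_def b2_def)
  show thesis
  proof (rule that)
    show "(G has_derivative (\<lambda>k. Re (k$1) * a1 + Re (k$2) * a2 + Im (k$2) * b2)) (at p)"
      using dG by (simp add: D'_expansion[symmetric])
    show "tangency_system m1 m3 m4 (Re (p$1)) (Re (p$2)) (Im (p$2)) (Im (p$3)) a1 a2 b2"
      using vf[of "E1 m1 m3 m4"] vf[of "E3 m1 m3"] vf[of "E4 m1 m4"]
      unfolding tangency_system_def D'_expansion
      by (simp add: affine_vf_E1 affine_vf_E3 affine_vf_E4 algebra_simps power2_eq_square)
  qed
qed

text \<open>The identity \<open>\<delta> d\<Phi> = 3 \<Phi> d\<delta>\<close> in coordinates: \<open>Dh\<close> and \<open>d\<delta>\<close> are the derivatives of \<open>v\<close> and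
  \<open>\<delta>\<close> in the direction \<open>(\<xi>, \<eta>, \<zeta>)\<close> of \<open>(x1, x2, y2)\<close>.\<close>
lemma tangency_system_orbit_identity:
  fixes m1 m3 m4 x1 x2 y2 v a1 a2 b2 \<xi> \<eta> \<zeta> :: real
  defines "\<delta> \<equiv> 1 + m3 * x2 + m4 * y2" and "s \<equiv> x1 + m1 * v / 2" and "N \<equiv> x2^2 + y2^2"
    and "Dh \<equiv> \<xi> * a1 + \<eta> * a2 + \<zeta> * b2" and "d\<delta> \<equiv> m3 * \<eta> + m4 * \<zeta>"
  assumes sys: "tangency_system m1 m3 m4 x1 x2 y2 v a1 a2 b2" and nz: "\<delta> \<noteq> 0"
  shows "(d\<delta> * (v - N) + \<delta> * (Dh - (2 * x2 * \<eta> + 2 * y2 * \<zeta>)) - 4 * s * (\<xi> + m1 * Dh / 2)) * \<delta>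
           = 3 * d\<delta> * (\<delta> * (v - N) - 2 * s^2)"
proof -
  define a \<Phi> where "a = \<delta> - 2 * m1 * s" and "\<Phi> = \<delta> * (v - N) - 2 * s^2"
  define X Y where "X = \<delta> * (m3 * (v - N) - 2 * x2 * \<delta> + a * a2) - 3 * m3 * \<Phi>"
    and "Y = \<delta> * (m4 * (v - N) - 2 * y2 * \<delta> + a * b2) - 3 * m4 * \<Phi>"
  define c3 c4 where "c3 = 3/2 * m3 * x1 - m1 * x2 - m1 * m3 * v / 4"
    and "c4 = 3/2 * m4 * x1 - m1 * y2 - m1 * m4 * v / 4"
  have e1: "a * a1 = 4 * s"
    using sys unfolding tangency_system_def a_def \<delta>_def s_def by (simp add: algebra_simps power2_eq_square)
  have e3: "c3 * a1 + (1 + m3 * x2) * a2 + m3 * y2 * b2 = 2 * x2 + 2 * m3 * v"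
   and e4: "c4 * a1 + m4 * x2 * a2 + (1 + m4 * y2) * b2 = 2 * y2 + 2 * m4 * v"
    using sys unfolding tangency_system_def c3_def c4_def by auto
  text \<open>Eliminating \<open>4 s = a a1\<close> turns the \<open>E3\<close>, \<open>E4\<close> equations into a linear system for \<open>X, Y\<close>
    with determinant \<open>\<delta>\<close>.\<close>
  have "(1 + m3 * x2) * X + m3 * y2 * Y
      = \<delta> * c3 * (4 * s) + \<delta> * a * ((1 + m3 * x2) * a2 + m3 * y2 * b2 - (2 * x2 + 2 * m3 * v))"
    unfolding X_def Y_def \<Phi>_def N_def \<delta>_def a_def s_def c3_def by (simp add: field_simps power2_eq_square)
  also have "\<dots> = \<delta> * a * (c3 * a1 + (1 + m3 * x2) * a2 + m3 * y2 * b2 - (2 * x2 + 2 * m3 * v))"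
    unfolding e1[symmetric] by (simp add: algebra_simps)
  also have "\<dots> = 0"
    using e3 by simp
  finally have z3: "(1 + m3 * x2) * X + m3 * y2 * Y = 0" .
  have "m4 * x2 * X + (1 + m4 * y2) * Y
      = \<delta> * c4 * (4 * s) + \<delta> * a * (m4 * x2 * a2 + (1 + m4 * y2) * b2 - (2 * y2 + 2 * m4 * v))"
    unfolding X_def Y_def \<Phi>_def N_def \<delta>_def a_def s_def c4_def by (simp add: field_simps power2_eq_square)
  also have "\<dots> = \<delta> * a * (c4 * a1 + m4 * x2 * a2 + (1 + m4 * y2) * b2 - (2 * y2 + 2 * m4 * v))"
    unfolding e1[symmetric] by (simp add: algebra_simps)
  also have "\<dots> = 0"
    using e4 by simp
  finally have z4: "m4 * x2 * X + (1 + m4 * y2) * Y = 0" .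
  have "\<delta> * X = (1 + m4 * y2) * ((1 + m3 * x2) * X + m3 * y2 * Y) - m3 * y2 * (m4 * x2 * X + (1 + m4 * y2) * Y)"
    unfolding \<delta>_def by algebra
  then have "\<delta> * X = 0" by (simp only: z3 z4)
  have "\<delta> * Y = (1 + m3 * x2) * (m4 * x2 * X + (1 + m4 * y2) * Y) - m4 * x2 * ((1 + m3 * x2) * X + m3 * y2 * Y)"
    unfolding \<delta>_def by algebra
  then have "\<delta> * Y = 0" by (simp only: z3 z4)
  with \<open>\<delta> * X = 0\<close> nz have "X = 0" "Y = 0" by simp_all
  moreover have "(d\<delta> * (v - N) + \<delta> * (Dh - (2 * x2 * \<eta> + 2 * y2 * \<zeta>)) - 4 * s * (\<xi> + m1 * Dh / 2)) * \<delta>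
      - 3 * d\<delta> * \<Phi> = \<delta> * \<xi> * (a * a1 - 4 * s) + \<eta> * X + \<zeta> * Y"
    unfolding X_def Y_def \<Phi>_def a_def Dh_def d\<delta>_def by (simp add: algebra_simps power2_eq_square)
  ultimately show ?thesis using e1 unfolding \<Phi>_def by simp
qed

lemma orbit_eq_graph_has_derivative:
  fixes G :: "complex^3 \<Rightarrow> real"
  assumes "(G has_derivative G') (at q)"
  shows "((\<lambda>y. orbit_eq m1 m3 m4 y (G y)) has_derivative
     (\<lambda>h. (m3 * Re (h$2) + m4 * Im (h$2)) * (G q - (Re (q$2)^2 + Im (q$2)^2))
          + delta m3 m4 q * (G' h - (2 * Re (q$2) * Re (h$2) + 2 * Im (q$2) * Im (h$2)))
          - 4 * (Re (q$1) + m1 * G q / 2) * (Re (h$1) + m1 * G' h / 2))) (at q)"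
  unfolding orbit_eq_def[abs_def] delta_def
  by (auto intro!: derivative_eq_intros assms simp: algebra_simps)

lemma delta_has_derivative:
  "(delta m3 m4 has_derivative (\<lambda>h. m3 * Re (h$2) + m4 * Im (h$2))) (at q)"
  unfolding delta_def[abs_def] by (auto intro!: derivative_eq_intros)

lemma orbit_quotient_has_derivative_zero:
  fixes G :: "complex^3 \<Rightarrow> real"
  assumes dG: "(G has_derivative (\<lambda>k. Re (k$1) * a1 + Re (k$2) * a2 + Im (k$2) * b2)) (at q)"
    and sys: "tangency_system m1 m3 m4 (Re (q$1)) (Re (q$2)) (Im (q$2)) (G q) a1 a2 b2"
    and nz: "delta m3 m4 q \<noteq> 0"
  shows "((\<lambda>y. orbit_eq m1 m3 m4 y (G y) / delta m3 m4 y ^ 3) has_derivative (\<lambda>h. 0)) (at q)"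
  using orbit_eq_graph_has_derivative[OF dG] delta_has_derivative nz
proof (rule has_derivative_quotient_power_zero)
  fix h :: "complex^3"
  show "((m3 * Re (h$2) + m4 * Im (h$2)) * (G q - (Re (q$2)^2 + Im (q$2)^2))
          + delta m3 m4 q * ((Re (h$1) * a1 + Re (h$2) * a2 + Im (h$2) * b2)
              - (2 * Re (q$2) * Re (h$2) + 2 * Im (q$2) * Im (h$2)))
          - 4 * (Re (q$1) + m1 * G q / 2) * (Re (h$1) + m1 * (Re (h$1) * a1 + Re (h$2) * a2 + Im (h$2) * b2) / 2))
        * delta m3 m4 q = of_nat 3 * (m3 * Re (h$2) + m4 * Im (h$2)) * orbit_eq m1 m3 m4 q (G q)"
    using tangency_system_orbit_identity[OF sys, where \<xi> = "Re (h$1)" and \<eta> = "Re (h$2)" and \<zeta> = "Im (h$2)"] nz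
    unfolding orbit_eq_def delta_def by simp
qed

lemma orbit_eq_root_unique:
  assumes "orbit_eq m1 m3 m4 p v = 0" and "orbit_eq m1 m3 m4 p w = 0"
    and "delta m3 m4 p - 2 * m1 * Re (p$1) - m1^2 * (v + w) / 2 \<noteq> 0"
  shows "v = w"
proof -
  have "(v - w) * (delta m3 m4 p - 2 * m1 * Re (p$1) - m1^2 * (v + w) / 2)
      = orbit_eq m1 m3 m4 p v - orbit_eq m1 m3 m4 p w"
    unfolding orbit_eq_def by (simp add: field_simps power2_eq_square)
  then show ?thesis using assms by simp
qed

lemma tangency_system_off_graph:
  fixes G :: "complex^3 \<Rightarrow> real" and q :: "complex^3"
  defines "p \<equiv> q + (G q - Im (q$3)) *\<^sub>R vector[0,0,\<i>]"
  assumes G_Im: "\<And>y t. G (y + t *\<^sub>R vector[0,0,\<i>]) = G y"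
    and tang: "\<And>A. A \<in> {E1 m1 m3 m4, E2, E3 m1 m3, E4 m1 m4, E5} \<Longrightarrow>
      \<exists>D. ((\<lambda>y. Im (y$3) - G y) has_derivative D) (at p) \<and> D (affine_vf A p) = 0"
  obtains a1 a2 b2 where
    "(G has_derivative (\<lambda>k. Re (k$1) * a1 + Re (k$2) * a2 + Im (k$2) * b2)) (at q)"
    "tangency_system m1 m3 m4 (Re (q$1)) (Re (q$2)) (Im (q$2)) (G q) a1 a2 b2"
proof -
  have p_coords: "p$1 = q$1" "p$2 = q$2" "Im (p$3) = G q"
    by (simp_all add: p_def G_Im)
  obtain D where dD: "((\<lambda>y. Im (y$3) - G y) has_derivative D) (at p)"
    using tang[of E5] by blast
  have "D (affine_vf A p) = 0" if A: "A \<in> {E1 m1 m3 m4, E2, E3 m1 m3, E4 m1 m4, E5}" for A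
    using tang[OF A] dD has_derivative_unique by metis
  with tangency_system_at[OF G_Im dD]
  obtain a1 a2 b2 where "(G has_derivative (\<lambda>k. Re (k$1) * a1 + Re (k$2) * a2 + Im (k$2) * b2)) (at p)"
      "tangency_system m1 m3 m4 (Re (q$1)) (Re (q$2)) (Im (q$2)) (G q) a1 a2 b2"
    unfolding p_coords by blast
  moreover from this(1)[unfolded p_def]
  have "(G has_derivative (\<lambda>k. Re (k$1) * a1 + Re (k$2) * a2 + Im (k$2) * b2)) (at q)"
    by (rule has_derivative_shift_invariant) (rule G_Im)
  ultimately show thesis using that by blast
qed

lemma orbit_eq_graph_vanishes_on_ball:
  fixes G :: "complex^3 \<Rightarrow> real"
  assumes G0: "G 0 = 0" and q: "q \<in> ball 0 \<rho>"
    and nz: "\<And>y. y \<in> ball 0 \<rho> \<Longrightarrow> delta m3 m4 y \<noteq> 0"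
    and sys: "\<And>y. y \<in> ball 0 \<rho> \<Longrightarrow>
      \<exists>a1 a2 b2. (G has_derivative (\<lambda>k. Re (k$1) * a1 + Re (k$2) * a2 + Im (k$2) * b2)) (at y)
        \<and> tangency_system m1 m3 m4 (Re (y$1)) (Re (y$2)) (Im (y$2)) (G y) a1 a2 b2"
  shows "orbit_eq m1 m3 m4 q (G q) = 0"
proof -
  define H where "H y = orbit_eq m1 m3 m4 y (G y) / delta m3 m4 y ^ 3" for y
  have "(H has_derivative (\<lambda>h. 0)) (at y within ball 0 \<rho>)" if y: "y \<in> ball 0 \<rho>" for y
  proof -
    from sys[OF y] obtain a1 a2 b2
      where "(G has_derivative (\<lambda>k. Re (k$1) * a1 + Re (k$2) * a2 + Im (k$2) * b2)) (at y)"
        "tangency_system m1 m3 m4 (Re (y$1)) (Re (y$2)) (Im (y$2)) (G y) a1 a2 b2"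
      by blast
    then have "(H has_derivative (\<lambda>h. 0)) (at y)"
      unfolding H_def[abs_def] using nz[OF y] by (rule orbit_quotient_has_derivative_zero)
    then show ?thesis by (rule has_derivative_at_withinI)
  qed
  moreover have "0 \<in> ball 0 \<rho>" using q by (auto intro: le_less_trans[OF norm_ge_zero])
  ultimately have "H 0 = H q" using q by (rule has_derivative_zero_unique[OF convex_ball])
  moreover have "H 0 = 0" by (simp add: H_def orbit_eq_def delta_def G0)
  ultimately show ?thesis using nz[OF q] by (simp add: H_def)
qed

lemma integral_variety_local_equation:
  fixes F :: "complex \<Rightarrow> complex \<Rightarrow> real \<Rightarrow> real" and M U :: "(complex^3) set"
  assumes U: "open U" "0 \<in> U" and F0: "F 0 0 0 = 0"
    and MU: "M \<inter> U = {p\<in>U. Im (p$3) = F (p$1) (p$2) (Re (p$3))}"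
    and tang: "\<And>A p. A \<in> {E1 m1 m3 m4, E2, E3 m1 m3, E4 m1 m4, E5} \<Longrightarrow> p \<in> M \<inter> U \<Longrightarrow>
      \<exists>D. ((\<lambda>q. Im (q$3) - F (q$1) (q$2) (Re (q$3))) has_derivative D) (at p) \<and> D (affine_vf A p) = 0"
  obtains V where "open V" "0 \<in> V" "M \<inter> V = {p\<in>V. orbit_eq m1 m3 m4 p (Im (p$3)) = 0}"
    "\<And>p. p \<in> V \<Longrightarrow> delta m3 m4 p > 0"
proof -
  define G where "G q = F (q$1) (q$2) (Re (q$3))" for q :: "complex^3"
  define e :: "complex^3" where "e = vector [0, 0, \<i>]"
  have G_shift: "G (q + t *\<^sub>R e) = G q" for q t
    by (simp add: G_def e_def)
  text \<open>\<open>G\<close> does not depend on \<open>Im w\<close>, so the tangency equations found on the graph point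
    \<open>lift q\<close> hold for \<open>G\<close> at every point \<open>q\<close> of a full neighbourhood of \<open>0\<close>.\<close>
  define lift where "lift q = q + (G q - Im (q$3)) *\<^sub>R e" for q
  have lift_coords: "lift q $ 1 = q $ 1" "lift q $ 2 = q $ 2" "Im (lift q $ 3) = G q" for q
    by (simp_all add: lift_def e_def)
  have G_lift: "G (lift q) = G q" for q
    unfolding lift_def by (rule G_shift)
  have graph: "p \<in> M \<inter> U \<longleftrightarrow> p \<in> U \<and> Im (p$3) = G p" for p
    using MU by (auto simp: G_def)
  have G0: "G 0 = 0" using F0 by (simp add: G_def)
  have lift0: "lift 0 = 0" by (simp add: lift_def G0)
  have tangency_near: "\<exists>a1 a2 b2. (G has_derivative (\<lambda>k. Re (k$1) * a1 + Re (k$2) * a2 + Im (k$2) * b2)) (at q)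
      \<and> tangency_system m1 m3 m4 (Re (q$1)) (Re (q$2)) (Im (q$2)) (G q) a1 a2 b2"
    if "lift q \<in> U" for q
  proof -
    have pM: "lift q \<in> M \<inter> U" using that graph[of "lift q"] lift_coords G_lift by simp
    have "\<exists>D. ((\<lambda>y. Im (y$3) - G y) has_derivative D) (at (lift q)) \<and> D (affine_vf A (lift q)) = 0"
      if "A \<in> {E1 m1 m3 m4, E2, E3 m1 m3, E4 m1 m4, E5}" for A
      using tang[OF that pM] by (simp add: G_def)
    then obtain a1 a2 b2
      where "(G has_derivative (\<lambda>k. Re (k$1) * a1 + Re (k$2) * a2 + Im (k$2) * b2)) (at q)"
        "tangency_system m1 m3 m4 (Re (q$1)) (Re (q$2)) (Im (q$2)) (G q) a1 a2 b2"
      unfolding lift_def e_def by (rule tangency_system_off_graph[OF G_shift[unfolded e_def]])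
    then show ?thesis by blast
  qed
  have "continuous (at 0) G"
    using tangency_near[of 0] lift0 U(2) by (auto dest: has_derivative_continuous)
  define g where "g q = delta m3 m4 q - 2 * m1 * Re (q$1) - m1^2 * (Im (q$3) + G q) / 2" for q
  have "continuous (at 0) (\<lambda>q. (lift q, delta m3 m4 q, g q))"
    unfolding lift_def[abs_def] g_def[abs_def] delta_def by (intro continuous_intros \<open>continuous (at 0) G\<close>)
      (auto intro!: has_derivative_continuous derivative_intros)
  then have "((\<lambda>q. (lift q, delta m3 m4 q, g q)) \<longlongrightarrow> (lift 0, delta m3 m4 0, g 0)) (nhds 0)"
    using tendsto_at_iff_tendsto_nhds[of "\<lambda>q. (lift q, delta m3 m4 q, g q)" 0]
    by (simp add: continuous_at)
  then have "\<forall>\<^sub>F q in nhds 0. (lift q, delta m3 m4 q, g q) \<in> U \<times> {0<..} \<times> {0<..}"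
    by (rule topological_tendstoD) (use U in \<open>auto intro!: open_Times simp: lift0 g_def delta_def G0\<close>)
  then obtain \<rho> where \<rho>: "\<rho> > 0"
    and near: "\<And>q. q \<in> ball 0 \<rho> \<Longrightarrow> lift q \<in> U \<and> delta m3 m4 q > 0 \<and> g q > 0"
    unfolding eventually_nhds_metric by (auto simp: dist_commute)
  have orbit_G: "orbit_eq m1 m3 m4 q (G q) = 0" if "q \<in> ball 0 \<rho>" for q
  proof (rule orbit_eq_graph_vanishes_on_ball[where G = G, OF G0 that])
    show "delta m3 m4 y \<noteq> 0" if "y \<in> ball 0 \<rho>" for y
      using near[OF that] by simp
    show "\<exists>a1 a2 b2. (G has_derivative (\<lambda>k. Re (k$1) * a1 + Re (k$2) * a2 + Im (k$2) * b2)) (at y)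
        \<and> tangency_system m1 m3 m4 (Re (y$1)) (Re (y$2)) (Im (y$2)) (G y) a1 a2 b2"
      if "y \<in> ball 0 \<rho>" for y
      using near[OF that] by (intro tangency_near) simp
  qed
  show thesis
  proof (rule that[of "ball 0 \<rho> \<inter> U"])
    show "open (ball 0 \<rho> \<inter> U)" "0 \<in> ball 0 \<rho> \<inter> U" using U \<rho> by auto
    show "delta m3 m4 p > 0" if "p \<in> ball 0 \<rho> \<inter> U" for p using near that by blast
    show "M \<inter> (ball 0 \<rho> \<inter> U) = {p \<in> ball 0 \<rho> \<inter> U. orbit_eq m1 m3 m4 p (Im (p$3)) = 0}"
    proof (intro set_eqI iffI)
      fix p assume p: "p \<in> M \<inter> (ball 0 \<rho> \<inter> U)"
      then have "Im (p$3) = G p" using graph by blast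
      then show "p \<in> {p \<in> ball 0 \<rho> \<inter> U. orbit_eq m1 m3 m4 p (Im (p$3)) = 0}"
        using p orbit_G by auto
    next
      fix p assume p: "p \<in> {p \<in> ball 0 \<rho> \<inter> U. orbit_eq m1 m3 m4 p (Im (p$3)) = 0}"
      then have "Im (p$3) = G p"
        using orbit_eq_root_unique[of m1 m3 m4 p "Im (p$3)" "G p"] orbit_G[of p] near[of p]
        by (auto simp: g_def)
      then show "p \<in> M \<inter> (ball 0 \<rho> \<inter> U)" using p graph by auto
    qed
  qed
qed

lemma normal_form_fn_origin:
  assumes "normal_form_fn F r"
  shows "F 0 0 0 = 0"
proof -
  obtain c where c_low: "\<And>\<alpha>. wdeg \<alpha> \<le> 2 \<Longrightarrow> c \<alpha> = 0"
    and sum: "((\<lambda>\<alpha>. c \<alpha> * monomial5 \<alpha> 0 0 0) has_sum (F 0 0 0 - Q_norm 0 0)) UNIV"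
    using assms unfolding normal_form_fn_def by force
  have "(\<lambda>\<alpha>. c \<alpha> * monomial5 \<alpha> 0 0 0) = (\<lambda>_. 0)"
  proof
    fix \<alpha> :: "nat \<times> nat \<times> nat \<times> nat \<times> nat"
    show "c \<alpha> * monomial5 \<alpha> 0 0 0 = 0"
    proof (cases "\<alpha> = (0, 0, 0, 0, 0)")
      case True
      then show ?thesis using c_low[of \<alpha>] by (simp add: wdeg_def)
    next
      case False
      then show ?thesis by (cases \<alpha>) (auto simp: monomial5_def zero_power)
    qed
  qed
  with sum have "F 0 0 0 - Q_norm 0 0 = 0"
    using has_sum_0 has_sum_unique by metis
  then show ?thesis by (simp add: Q_norm_def)
qed

definition mat3 :: "complex list list \<Rightarrow> complex^3^3" where
  "mat3 rs = vector (map vector rs)"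

lemma mat3_mult_vector:
  "mat3 [[a,b,c],[d,e,f],[g,h,k]] *v p =
     vector [a * p$1 + b * p$2 + c * p$3, d * p$1 + e * p$2 + f * p$3, g * p$1 + h * p$2 + k * p$3]"
  unfolding vec_eq_iff forall_3 matrix_vector_mult_def by (simp add: sum_3 mat3_def)

lemma invertible_upper_triangular3:
  "a * d * k \<noteq> 0 \<Longrightarrow> invertible (mat3 [[a,b,c],[0,d,f],[0,0,k]])"
  by (simp add: invertible_det_nz det_3 mat3_def)

lemma affinely_equiv_toI:
  fixes A :: "complex^3^3" and M S V :: "(complex^3) set"
  assumes A: "invertible A" and V: "open V" "0 \<in> V" and MV: "M \<inter> V = {p\<in>V. A *v p \<in> S}"
  shows "affinely_equiv_to M S"
proof -
  obtain B where AB: "A ** B = mat 1" and BA: "B ** A = mat 1"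
    using A unfolding invertible_def by blast
  have BA_p: "B *v (A *v p) = p" and AB_p: "A *v (B *v p) = p" for p
    by (simp_all add: matrix_vector_mul_assoc AB BA)
  show ?thesis
    unfolding affinely_equiv_to_def
  proof (intro exI conjI)
    show "invertible A" "open V" "0 \<in> V" by fact+
    show "open ((\<lambda>y. B *v y) -` V)"
      using V(1) by (rule open_vimage) (intro continuous_intros)
    show "(\<lambda>p. A *v p + 0) ` (M \<inter> V) = S \<inter> (\<lambda>y. B *v y) -` V"
    proof (intro set_eqI iffI)
      fix y assume "y \<in> (\<lambda>p. A *v p + 0) ` (M \<inter> V)"
      then obtain p where "p \<in> M \<inter> V" "y = A *v p" by auto
      then show "y \<in> S \<inter> (\<lambda>y. B *v y) -` V" using MV BA_p by auto
    next
      fix y assume "y \<in> S \<inter> (\<lambda>y. B *v y) -` V"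
      then have "B *v y \<in> M \<inter> V" using MV AB_p by auto
      moreover have "y = A *v (B *v y) + 0" using AB_p by simp
      ultimately show "y \<in> (\<lambda>p. A *v p + 0) ` (M \<inter> V)" by blast
    qed
  qed
qed

lemma orbit_equiv_model1:
  assumes "m3 = 0" "m4 = 0" and V: "open V" "0 \<in> V"
    and MV: "M \<inter> V = {p\<in>V. orbit_eq m1 m3 m4 p (Im (p$3)) = 0}"
  shows "affinely_equiv_to M model1"
proof (rule affinely_equiv_toI[OF _ V])
  let ?A = "mat3 [[1, 0, - \<i> * of_real m1 / 2], [0, 1, 0], [0, 0, 1]]"
  show "invertible ?A" by (rule invertible_upper_triangular3) simp
  show "M \<inter> V = {p\<in>V. ?A *v p \<in> model1}"
    unfolding MV using assms(1,2)
    by (auto simp: model1_def orbit_eq_def delta_def mat3_mult_vector cmod_power2 algebra_simps)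
qed

lemma orbit_equiv_model2:
  assumes "m3 \<noteq> 0 \<or> m4 \<noteq> 0" and V: "open V" "0 \<in> V"
    and MV: "M \<inter> V = {p\<in>V. orbit_eq m1 m3 m4 p (Im (p$3)) = 0}"
    and pos: "\<And>p. p \<in> V \<Longrightarrow> delta m3 m4 p > 0"
  shows "affinely_equiv_to M model2"
proof -
  define c where "c = sqrt (m3^2 + m4^2)"
  have c2: "c^2 = m3^2 + m4^2" by (simp add: c_def)
  have "c > 0" using assms(1) by (simp add: c_def sum_power2_gt_zero_iff)
  define A where "A = mat3 [[2 * of_real c, 0, - \<i> * of_real (m1 * c)],
    [0, - (of_real m3 - \<i> * of_real m4), 0], [0, 0, 2 * of_real (c^2)]]"
  show ?thesis
  proof (rule affinely_equiv_toI[OF _ V])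
    show "invertible A"
      unfolding A_def using \<open>c > 0\<close> assms(1) by (intro invertible_upper_triangular3) (simp add: complex_eq_iff)
    have "A *v p \<in> model2 \<longleftrightarrow> orbit_eq m1 m3 m4 p (Im (p$3)) = 0" if "p \<in> V" for p
    proof -
      define \<delta> s N v where "\<delta> = delta m3 m4 p" and "s = Re (p$1) + m1 * Im (p$3) / 2"
        and "N = Re (p$2)^2 + Im (p$2)^2" and "v = Im (p$3)"
      have "\<delta> > 0" using pos[OF that] by (simp add: \<delta>_def)
      have coords: "Re ((A *v p)$1) = 2 * c * s" "Re ((A *v p)$2) = 1 - \<delta>"
          "Im ((A *v p)$3) = 2 * c^2 * v"
        by (simp_all add: A_def mat3_mult_vector s_def \<delta>_def delta_def v_def algebra_simps)
      have cmod_coord: "(cmod ((A *v p)$2))^2 = c^2 * N"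
        unfolding cmod_power2 c2 by (simp add: A_def mat3_mult_vector N_def algebra_simps power2_eq_square)
      have "A *v p \<in> model2 \<longleftrightarrow> 2 * c^2 * v = (2 * c * s)^2 / \<delta> + 2 * (c^2 * N)"
        unfolding model2_def mem_Collect_eq coords cmod_coord using \<open>\<delta> > 0\<close> by simp
      also have "\<dots> \<longleftrightarrow> 2 * c^2 * ((\<delta> * (v - N) - 2 * s^2) / \<delta>) = 0"
        using \<open>\<delta> > 0\<close> by (simp add: field_simps power2_eq_square)
      also have "\<dots> \<longleftrightarrow> orbit_eq m1 m3 m4 p (Im (p$3)) = 0"
        using \<open>\<delta> > 0\<close> \<open>c > 0\<close> by (simp add: orbit_eq_def \<delta>_def s_def N_def v_def)
      finally show ?thesis .
    qed
    then show "M \<inter> V = {p\<in>V. A *v p \<in> model2}"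
      unfolding MV by blast
  qed
qed

theorem theorem4p6:
  fixes m1 m3 m4 :: real and M :: "(complex^3) set"
  assumes "integral_variety m1 m3 m4 M"
  shows "affinely_equiv_to M model1 \<or> affinely_equiv_to M model2"
proof -
  obtain F r U where nf: "normal_form_fn F r" and U: "open U" "0 \<in> U"
    and MU: "M \<inter> U = {p \<in> U. Im (p$3) = F (p$1) (p$2) (Re (p$3))}"
    and tang: "\<forall>A \<in> lie_g m1 m3 m4. \<forall>p \<in> M \<inter> U.
           \<exists>D. ((\<lambda>q. Im (q$3) - F (q$1) (q$2) (Re (q$3))) has_derivative D) (at p)
               \<and> D (affine_vf A p) = 0"
    using assms unfolding integral_variety_def by blast
  have "{E1 m1 m3 m4, E2, E3 m1 m3, E4 m1 m4, E5} \<subseteq> lie_g m1 m3 m4"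
    unfolding lie_g_def by (rule span_superset)
  with tang have tang_gens: "\<And>A p. A \<in> {E1 m1 m3 m4, E2, E3 m1 m3, E4 m1 m4, E5} \<Longrightarrow> p \<in> M \<inter> U \<Longrightarrow>
      \<exists>D. ((\<lambda>q. Im (q$3) - F (q$1) (q$2) (Re (q$3))) has_derivative D) (at p) \<and> D (affine_vf A p) = 0"
    by blast
  obtain V where V: "open V" "0 \<in> V"
    and MV: "M \<inter> V = {p\<in>V. orbit_eq m1 m3 m4 p (Im (p$3)) = 0}"
    and pos: "\<And>p. p \<in> V \<Longrightarrow> delta m3 m4 p > 0"
    using integral_variety_local_equation[OF U normal_form_fn_origin[OF nf] MU tang_gens] by blast
  show ?thesis
  proof (cases "m3 = 0 \<and> m4 = 0")
    case True
    then show ?thesis using orbit_equiv_model1[OF _ _ V MV] by blast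
  next
    case False
    then show ?thesis using orbit_equiv_model2[OF _ V MV pos] by blast
  qed
qed

end
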